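(* Let $X$ be a set, $B\subseteq\mathbb{R}^X$ an $\mathbb{R}$-subalgebra and $Q\subseteq B$ a quadratic module with $K_{Q,X}=X$ and $m(X)=K_{Q,Y_B}$. Let $f\in\mathbb{R}^X$ and $A=B[f]\subseteq\mathbb{R}^X$. In each of the following cases, the restriction map $p\colon K_{Q',Y_A}\to K_{Q,Y_B}$ is injective, $K_{Q',X}=X$, and $m(X)=K_{Q',Y_A}$: (1) $f=\sqrt[r]{g}$ (pointwise real $r$-th root) with $r$ odd and $g\in B$, and $Q'$ is the quadratic module of $A$ generated by $Q$; (2) $f=\sqrt[s]{g}$ (pointwise nonnegative $s$-th root) with $s$ even, $g\in B$, $g\ge0$ on $X$, and $Q'$ is the quadratic module of $A$ generated by $Q$ and $f$; (3) $f=\frac1g$ with $g\in B$, $g(x)\ne0$ for all $x\in X$, and $Q'$ is the quadratic module of $A$ generated by $Q$; (4) $f=g\cdot\chi_{\{q\ge0\}}+h\cdot\chi_{\{q<0\}}$ for some $g,h,q\in B$ such that for $x\in X$, $q(x)=0$ implies $g(x)=h(x)$, and $Q'$ is the quadratic module of $A$ generated by $Q$ and $-q(f-g)^2$, $q(f-h)^2$.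
   Context: A quadratic module of a commutative unital $\mathbb{R}$-algebra $C$ is a subset $Q\subseteq C$ with $Q+Q\subseteq Q$, $c^2Q\subseteq Q$ for all $c\in C$, and $1\in Q$. For an $\mathbb{R}$-subalgebra $C\subseteq\mathbb{R}^X$ and a quadratic module $Q$ of $C$: $K_{Q,X}:=\{x\in X\mid g(x)\ge0\ \forall g\in Q\}$; $Y_C$ is the set of unital $\mathbb{R}$-algebra homomorphisms $C\to\mathbb{R}$, with the weakest topology making all maps $y\mapsto y(c)$ continuous; $K_{Q,Y_C}:=\{y\in Y_C\mid y(g)\ge0\ \forall g\in Q\}$; $m\colon X\to Y_C$, $m(x)(c)=c(x)$. The map $p\colon Y_A\to Y_B$ is restriction $y\mapsto y|_B$; it maps $K_{Q',Y_A}$ into $K_{Q,Y_B}$ whenever $Q'\cap B\supseteq Q$. $\chi_S$ denotes the characteristic function of $S\subseteq X$, and $\{q\ge0\}=\{x\in X\mid q(x)\ge0\}$, etc. *)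

theory Defs
  imports "HOL-Library.FuncSet" Complex_Main
begin

text \<open>The ambient set X is the type 'x; elements of R^X are functions 'x \<Rightarrow> real.\<close>

definition subalgebra :: "('x \<Rightarrow> real) set \<Rightarrow> bool" where
  "subalgebra A \<longleftrightarrow> (\<lambda>x. 1) \<in> A
     \<and> (\<forall>a\<in>A. \<forall>b\<in>A. (\<lambda>x. a x + b x) \<in> A \<and> (\<lambda>x. a x * b x) \<in> A)
     \<and> (\<forall>c::real. \<forall>a\<in>A. (\<lambda>x. c * a x) \<in> A)"

definition quadratic_module :: "('x \<Rightarrow> real) set \<Rightarrow> ('x \<Rightarrow> real) set \<Rightarrow> bool" where
  "quadratic_module C Q \<longleftrightarrow> Q \<subseteq> C
     \<and> (\<forall>a\<in>Q. \<forall>b\<in>Q. (\<lambda>x. a x + b x) \<in> Q)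
     \<and> (\<forall>c\<in>C. \<forall>a\<in>Q. (\<lambda>x. (c x)^2 * a x) \<in> Q)
     \<and> (\<lambda>x. 1) \<in> Q"

text \<open>Y_C: unital R-algebra homomorphisms C \<rightarrow> R, represented extensionally on C.\<close>
definition char_space :: "('x \<Rightarrow> real) set \<Rightarrow> (('x \<Rightarrow> real) \<Rightarrow> real) set" where
  "char_space C = {y \<in> extensional C.
     (\<forall>a\<in>C. \<forall>b\<in>C. y (\<lambda>x. a x + b x) = y a + y b \<and> y (\<lambda>x. a x * b x) = y a * y b)
     \<and> (\<forall>c::real. \<forall>a\<in>C. y (\<lambda>x. c * a x) = c * y a)
     \<and> y (\<lambda>x. 1) = 1}"

definition KX :: "('x \<Rightarrow> real) set \<Rightarrow> 'x set" where
  "KX Q = {x. \<forall>g\<in>Q. 0 \<le> g x}"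

definition KY :: "('x \<Rightarrow> real) set \<Rightarrow> ('x \<Rightarrow> real) set \<Rightarrow> (('x \<Rightarrow> real) \<Rightarrow> real) set" where
  "KY C Q = {y \<in> char_space C. \<forall>g\<in>Q. 0 \<le> y g}"

definition evalm :: "('x \<Rightarrow> real) set \<Rightarrow> 'x \<Rightarrow> (('x \<Rightarrow> real) \<Rightarrow> real)" where
  "evalm C x = restrict (\<lambda>c. c x) C"

definition gen_alg :: "('x \<Rightarrow> real) set \<Rightarrow> ('x \<Rightarrow> real) set \<Rightarrow> ('x \<Rightarrow> real) set" where
  "gen_alg B S = \<Inter>{A. subalgebra A \<and> B \<subseteq> A \<and> S \<subseteq> A}"

definition gen_qm :: "('x \<Rightarrow> real) set \<Rightarrow> ('x \<Rightarrow> real) set \<Rightarrow> ('x \<Rightarrow> real) set" where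
  "gen_qm A S = \<Inter>{Q. quadratic_module A Q \<and> S \<subseteq> Q}"

definition prop_concl :: "('x \<Rightarrow> real) set \<Rightarrow> ('x \<Rightarrow> real) set \<Rightarrow> ('x \<Rightarrow> real) set \<Rightarrow> bool" where
  "prop_concl B A Q' \<longleftrightarrow> inj_on (\<lambda>y. restrict y B) (KY A Q')
     \<and> KX Q' = UNIV \<and> range (evalm A) = KY A Q'"

end

theory Submission
  imports Defs
begin

text \<open>
  Every function adjoined to \<open>B\<close> is determined pointwise by an algebraic relation over \<open>B\<close>
  (\<open>f\<^sup>r = g\<close>, \<open>f g = 1\<close>, \<open>(f - g)(f - h) = 0\<close>), and the generators of \<open>Q'\<close> are nonnegative on
  \<open>X\<close> and pin down the remaining sign ambiguity. Hence a character of \<open>A = B[f]\<close> that is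
  nonnegative on \<open>Q'\<close> and restricts to evaluation at \<open>x\<close> on \<open>B\<close> must send \<open>f\<close> to \<open>f(x)\<close>; as
  \<open>A\<close> is generated by \<open>B\<close> and \<open>f\<close>, it is evaluation at \<open>x\<close>. Together with \<open>m(X) = K\<^sub>Q\<^sub>,\<^sub>Y\<^sub>B\<close>
  this gives injectivity of the restriction map and \<open>m(X) = K\<^sub>Q\<^sub>'\<^sub>,\<^sub>Y\<^sub>A\<close>.
\<close>

lemma subalgebra_one: "subalgebra A \<Longrightarrow> (\<lambda>x. 1) \<in> A"
  by (simp add: subalgebra_def)

lemma subalgebra_add: "subalgebra A \<Longrightarrow> a \<in> A \<Longrightarrow> b \<in> A \<Longrightarrow> (\<lambda>x. a x + b x) \<in> A"
  by (simp add: subalgebra_def)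

lemma subalgebra_mult: "subalgebra A \<Longrightarrow> a \<in> A \<Longrightarrow> b \<in> A \<Longrightarrow> (\<lambda>x. a x * b x) \<in> A"
  by (simp add: subalgebra_def)

lemma subalgebra_scaleR: "subalgebra A \<Longrightarrow> a \<in> A \<Longrightarrow> (\<lambda>x. c * a x) \<in> A"
  by (simp add: subalgebra_def)

lemma subalgebra_const: "subalgebra A \<Longrightarrow> (\<lambda>x. c) \<in> A"
  using subalgebra_scaleR[of A "\<lambda>x. 1" c] subalgebra_one[of A] by simp

lemma subalgebra_uminus: "subalgebra A \<Longrightarrow> a \<in> A \<Longrightarrow> (\<lambda>x. - a x) \<in> A"
  using subalgebra_scaleR[of A a "-1"] by simp

lemma subalgebra_diff: "subalgebra A \<Longrightarrow> a \<in> A \<Longrightarrow> b \<in> A \<Longrightarrow> (\<lambda>x. a x - b x) \<in> A"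
  using subalgebra_add[of A a "\<lambda>x. - b x"] subalgebra_uminus[of A b] by simp

lemma subalgebra_power: "subalgebra A \<Longrightarrow> a \<in> A \<Longrightarrow> (\<lambda>x. a x ^ n) \<in> A"
  by (induction n) (simp_all add: subalgebra_one subalgebra_mult)

lemmas subalgebra_closed =
  subalgebra_one subalgebra_add subalgebra_mult subalgebra_scaleR
  subalgebra_const subalgebra_uminus subalgebra_diff subalgebra_power

lemma char_space_add: "y \<in> char_space A \<Longrightarrow> a \<in> A \<Longrightarrow> b \<in> A \<Longrightarrow> y (\<lambda>x. a x + b x) = y a + y b"
  by (simp add: char_space_def)

lemma char_space_mult: "y \<in> char_space A \<Longrightarrow> a \<in> A \<Longrightarrow> b \<in> A \<Longrightarrow> y (\<lambda>x. a x * b x) = y a * y b"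
  by (simp add: char_space_def)

lemma char_space_scaleR: "y \<in> char_space A \<Longrightarrow> a \<in> A \<Longrightarrow> y (\<lambda>x. c * a x) = c * y a"
  by (simp add: char_space_def)

lemma char_space_one: "y \<in> char_space A \<Longrightarrow> y (\<lambda>x. 1) = 1"
  by (simp add: char_space_def)

lemma char_space_const: "subalgebra A \<Longrightarrow> y \<in> char_space A \<Longrightarrow> y (\<lambda>x. c) = c"
  using char_space_scaleR[of y A "\<lambda>x. 1" c] char_space_one[of y A] subalgebra_one[of A] by simp

lemma char_space_uminus: "y \<in> char_space A \<Longrightarrow> a \<in> A \<Longrightarrow> y (\<lambda>x. - a x) = - y a"
  using char_space_scaleR[of y A a "-1"] by simp

lemma char_space_diff:
  "subalgebra A \<Longrightarrow> y \<in> char_space A \<Longrightarrow> a \<in> A \<Longrightarrow> b \<in> A \<Longrightarrow> y (\<lambda>x. a x - b x) = y a - y b"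
  using char_space_add[of y A a "\<lambda>x. - b x"] char_space_uminus[of y A b] subalgebra_uminus[of A b]
  by simp

lemma char_space_power:
  assumes "subalgebra A" "y \<in> char_space A" "a \<in> A"
  shows "y (\<lambda>x. a x ^ n) = y a ^ n"
  by (induction n)
    (simp_all add: char_space_one[OF assms(2)] char_space_mult[OF assms(2,3) subalgebra_power[OF assms(1,3)]])

lemma evalm_in_char_space: "subalgebra A \<Longrightarrow> evalm A x \<in> char_space A"
  unfolding char_space_def evalm_def by (auto intro: subalgebra_closed)

lemma restrict_in_char_space:
  assumes "subalgebra B" "B \<subseteq> A" "y \<in> char_space A"
  shows "restrict y B \<in> char_space B"
  using assms subalgebra_closed[OF assms(1)]
  by (auto simp: char_space_def subsetD)

lemma restrict_eq_evalm_iff: "restrict y B = evalm B x \<longleftrightarrow> (\<forall>b\<in>B. y b = b x)"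
  by (auto simp: evalm_def restrict_def fun_eq_iff)

lemma subalgebra_gen_alg: "subalgebra (gen_alg B S)"
  by (auto simp: subalgebra_def gen_alg_def)

lemma gen_alg_superset: "B \<subseteq> gen_alg B S"
  by (auto simp: gen_alg_def)

lemma gen_alg_generators: "S \<subseteq> gen_alg B S"
  by (auto simp: gen_alg_def)

lemma gen_alg_least: "subalgebra E \<Longrightarrow> B \<subseteq> E \<Longrightarrow> S \<subseteq> E \<Longrightarrow> gen_alg B S \<subseteq> E"
  by (auto simp: gen_alg_def)

lemma gen_qm_superset: "G \<subseteq> gen_qm A G"
  by (auto simp: gen_qm_def)

lemma gen_qm_least: "quadratic_module A P \<Longrightarrow> G \<subseteq> P \<Longrightarrow> gen_qm A G \<subseteq> P"
  by (auto simp: gen_qm_def)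

lemma quadratic_module_nonneg: "subalgebra A \<Longrightarrow> quadratic_module A {a\<in>A. \<forall>x. 0 \<le> a x}"
  unfolding quadratic_module_def by (auto intro: subalgebra_closed)

lemma gen_qm_subset_nonneg:
  "subalgebra A \<Longrightarrow> G \<subseteq> A \<Longrightarrow> \<forall>a\<in>G. \<forall>x. 0 \<le> a x \<Longrightarrow> gen_qm A G \<subseteq> {a\<in>A. \<forall>x. 0 \<le> a x}"
  by (rule gen_qm_least[OF quadratic_module_nonneg]) auto

lemma KX_eq_UNIV_iff: "KX Q = UNIV \<longleftrightarrow> (\<forall>a\<in>Q. \<forall>x. 0 \<le> a x)"
  by (auto simp: KX_def)

lemma quadratic_module_subset_gen_alg: "quadratic_module B Q \<Longrightarrow> Q \<subseteq> gen_alg B S"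
  using gen_alg_superset by (auto simp: quadratic_module_def)

lemma char_space_gen_alg_eqI:
  assumes y1: "y1 \<in> char_space (gen_alg B {f})" and y2: "y2 \<in> char_space (gen_alg B {f})"
    and "\<forall>b\<in>B. y1 b = y2 b" and "y1 f = y2 f"
  shows "y1 = y2"
proof
  fix a
  let ?A = "gen_alg B {f}"
  have "subalgebra {a\<in>?A. y1 a = y2 a}"
    using subalgebra_gen_alg[of B "{f}"] y1 y2
    by (auto simp: subalgebra_def char_space_add char_space_mult char_space_scaleR char_space_one)
  then have "?A \<subseteq> {a\<in>?A. y1 a = y2 a}"
    using assms(3,4) gen_alg_superset gen_alg_generators by (intro gen_alg_least) blast+
  moreover have "y1 \<in> extensional ?A" "y2 \<in> extensional ?A"
    using y1 y2 by (auto simp: char_space_def)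
  ultimately show "y1 a = y2 a"
    by (cases "a \<in> ?A") (auto simp: extensional_def)
qed

locale adjoin_setting =
  fixes B Q G :: "('x \<Rightarrow> real) set" and f :: "'x \<Rightarrow> real"
  assumes subalgebra_B: "subalgebra B"
    and qm_Q: "quadratic_module B Q"
    and evalm_B: "range (evalm B) = KY B Q"
    and Q_subset_G: "Q \<subseteq> G"
    and G_subset: "G \<subseteq> gen_alg B {f}"
    and G_nonneg: "\<forall>a\<in>G. \<forall>x. 0 \<le> a x"
    and char_value: "\<And>y x. y \<in> char_space (gen_alg B {f}) \<Longrightarrow> \<forall>a\<in>G. 0 \<le> y a
                        \<Longrightarrow> \<forall>b\<in>B. y b = b x \<Longrightarrow> y f = f x"
begin

abbreviation "A \<equiv> gen_alg B {f}"
abbreviation "Q' \<equiv> gen_qm A G"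

lemma KY_restrict_ex_evalm: "y \<in> KY A Q' \<Longrightarrow> \<exists>x. restrict y B = evalm B x"
proof -
  assume y: "y \<in> KY A Q'"
  then have "y \<in> char_space A"
    by (simp add: KY_def)
  then have "restrict y B \<in> char_space B"
    by (rule restrict_in_char_space[OF subalgebra_B gen_alg_superset])
  moreover have "\<forall>g\<in>Q. 0 \<le> restrict y B g"
    using y Q_subset_G gen_qm_superset[of G A] qm_Q by (auto simp: KY_def quadratic_module_def)
  ultimately have "restrict y B \<in> KY B Q"
    by (simp add: KY_def)
  then show ?thesis
    using evalm_B by (metis imageE)
qed

lemma KY_eq_evalm:
  assumes y: "y \<in> KY A Q'" and restr: "restrict y B = evalm B x"
  shows "y = evalm A x"
proof (rule char_space_gen_alg_eqI)
  show yA: "y \<in> char_space A"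
    using y by (simp add: KY_def)
  show "evalm A x \<in> char_space A"
    by (rule evalm_in_char_space[OF subalgebra_gen_alg])
  have yB: "\<forall>b\<in>B. y b = b x"
    using restr by (simp only: restrict_eq_evalm_iff)
  then show "\<forall>b\<in>B. y b = evalm A x b"
    using gen_alg_superset[of B "{f}"] by (auto simp: evalm_def)
  have "\<forall>a\<in>G. 0 \<le> y a"
    using y gen_qm_superset[of G A] by (auto simp: KY_def)
  then have "y f = f x"
    using char_value[OF yA _ yB] by blast
  then show "y f = evalm A x f"
    using gen_alg_generators[of "{f}" B] by (simp add: evalm_def)
qed

lemma prop_concl: "prop_concl B A Q'"
  unfolding prop_concl_def
proof (intro conjI)
  show "inj_on (\<lambda>y. restrict y B) (KY A Q')"
  proof (rule inj_onI)
    fix y1 y2 assume y: "y1 \<in> KY A Q'" "y2 \<in> KY A Q'" "restrict y1 B = restrict y2 B"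
    obtain x where x: "restrict y1 B = evalm B x"
      using KY_restrict_ex_evalm[OF y(1)] by blast
    show "y1 = y2"
      using KY_eq_evalm[OF y(1) x] KY_eq_evalm[OF y(2)] x y(3) by simp
  qed
  have Q'_nonneg: "Q' \<subseteq> {a\<in>A. \<forall>x. 0 \<le> a x}"
    by (rule gen_qm_subset_nonneg[OF subalgebra_gen_alg G_subset G_nonneg])
  then show "KX Q' = UNIV"
    by (auto simp: KX_def)
  show "range (evalm A) = KY A Q'"
  proof
    show "range (evalm A) \<subseteq> KY A Q'"
      using evalm_in_char_space[OF subalgebra_gen_alg] Q'_nonneg by (auto simp: KY_def evalm_def)
    show "KY A Q' \<subseteq> range (evalm A)"
      using KY_restrict_ex_evalm KY_eq_evalm by blast
  qed
qed

end

lemma char_space_odd_root: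
  assumes "subalgebra A" "y \<in> char_space A" "f \<in> A" "g \<in> A" "odd r" "\<forall>x. f x ^ r = g x"
  shows "y f = root r (y g)"
proof -
  have "y f ^ r = y g"
    using char_space_power[OF assms(1-3), of r] assms(6) by simp
  then show ?thesis
    using odd_real_root_unique[OF assms(5)] by metis
qed

lemma char_space_even_root:
  assumes "subalgebra A" "y \<in> char_space A" "f \<in> A" "g \<in> A" "0 < s" "\<forall>x. f x ^ s = g x"
    and "0 \<le> y f"
  shows "y f = root s (y g)"
proof -
  have "y f ^ s = y g"
    using char_space_power[OF assms(1-3), of s] assms(6) by simp
  then show ?thesis
    using real_root_power_cancel[OF assms(5,7)] by simp
qed

lemma char_space_inverse:
  assumes "y \<in> char_space A" "f \<in> A" "g \<in> A" "\<forall>x. f x * g x = 1"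
  shows "y f = 1 / y g"
proof -
  have "y f * y g = 1"
    using char_space_mult[OF assms(1-3)] char_space_one[OF assms(1)] assms(4) by simp
  then have "y g \<noteq> 0"
    by auto
  with \<open>y f * y g = 1\<close> show ?thesis
    by (simp add: field_simps)
qed

text \<open>
  Since \<open>(f - g)(f - h) = 0\<close>, a character sends \<open>f\<close> to \<open>y g\<close> or \<open>y h\<close>; the two generators
  \<open>-q(f - g)\<^sup>2\<close> and \<open>q(f - h)\<^sup>2\<close> exclude the wrong choice when \<open>y q \<noteq> 0\<close>.
\<close>

lemma char_space_case_split:
  assumes A: "subalgebra A" and y: "y \<in> char_space A" and in_A: "f \<in> A" "g \<in> A" "h \<in> A" "q \<in> A"
    and f: "\<forall>x. (f x - g x) * (f x - h x) = 0"
    and nonneg_g: "0 \<le> y (\<lambda>x. - q x * (f x - g x)^2)"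
    and nonneg_h: "0 \<le> y (\<lambda>x. q x * (f x - h x)^2)"
  shows "y f = y g \<or> y f = y h" and "0 < y q \<Longrightarrow> y f = y g" and "y q < 0 \<Longrightarrow> y f = y h"
proof -
  have diff: "y (\<lambda>x. f x - k x) = y f - y k" if "k \<in> A" for k
    using char_space_diff[OF A y in_A(1) that] .
  have "y (\<lambda>x. (f x - g x) * (f x - h x)) = (y f - y g) * (y f - y h)"
    using char_space_mult[OF y] subalgebra_diff[OF A] in_A diff by simp
  then show "y f = y g \<or> y f = y h"
    using f char_space_const[OF A y, of 0] by simp
  have "y (\<lambda>x. - q x * (f x - g x)^2) = - y q * (y f - y g)^2"
    using char_space_mult[OF y] char_space_uminus[OF y] char_space_power[OF A y]
      subalgebra_closed[OF A] in_A diff by simp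
  moreover have "y (\<lambda>x. q x * (f x - h x)^2) = y q * (y f - y h)^2"
    using char_space_mult[OF y] char_space_power[OF A y] subalgebra_closed[OF A] in_A diff by simp
  ultimately have "y q * (y f - y g)^2 \<le> 0" "0 \<le> y q * (y f - y h)^2"
    using nonneg_g nonneg_h by simp_all
  then show "0 < y q \<Longrightarrow> y f = y g" and "y q < 0 \<Longrightarrow> y f = y h"
    by (auto simp: mult_le_0_iff zero_le_mult_iff)
qed

context
  fixes B Q :: "('x \<Rightarrow> real) set"
  assumes subalgebra_B: "subalgebra B"
    and qm_Q: "quadratic_module B Q"
    and KX_Q: "KX Q = UNIV"
    and evalm_B: "range (evalm B) = KY B Q"
begin

lemma prop_concl_adjoin:
  assumes E_subset: "E \<subseteq> gen_alg B {f}" and E_nonneg: "\<forall>a\<in>E. \<forall>x. 0 \<le> a x"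
    and "\<And>y x. y \<in> char_space (gen_alg B {f}) \<Longrightarrow> \<forall>a\<in>Q \<union> E. 0 \<le> y a
           \<Longrightarrow> \<forall>b\<in>B. y b = b x \<Longrightarrow> y f = f x"
  shows "prop_concl B (gen_alg B {f}) (gen_qm (gen_alg B {f}) (Q \<union> E))"
proof (rule adjoin_setting.prop_concl, unfold_locales)
  show "Q \<union> E \<subseteq> gen_alg B {f}"
    using quadratic_module_subset_gen_alg[OF qm_Q] E_subset by blast
  show "\<forall>a\<in>Q \<union> E. \<forall>x. 0 \<le> a x"
    using KX_Q E_nonneg by (auto simp: KX_eq_UNIV_iff)
qed (use subalgebra_B qm_Q evalm_B assms(3) in blast)+

lemma adjoin_odd_root:
  assumes "odd r" "g \<in> B"
  defines "f \<equiv> \<lambda>x. root r (g x)"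
  shows "prop_concl B (gen_alg B {f}) (gen_qm (gen_alg B {f}) Q)"
proof -
  have "y f = f x" if y: "y \<in> char_space (gen_alg B {f})" and "\<forall>b\<in>B. y b = b x" for y x
  proof -
    have "g \<in> gen_alg B {f}"
      using assms(2) gen_alg_superset by blast
    moreover have "\<forall>x. f x ^ r = g x"
      using assms(1) by (simp add: f_def odd_real_root_pow)
    ultimately show ?thesis
      using char_space_odd_root[OF subalgebra_gen_alg y gen_alg_generators[THEN subsetD]] assms(1,2) that(2)
      by (simp add: f_def)
  qed
  then show ?thesis
    using prop_concl_adjoin[of "{}" f] by simp
qed

lemma adjoin_even_root:
  assumes "even s" "0 < s" "g \<in> B" "\<forall>x. 0 \<le> g x"
  defines "f \<equiv> \<lambda>x. root s (g x)"
  shows "prop_concl B (gen_alg B {f}) (gen_qm (gen_alg B {f}) (Q \<union> {f}))"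
proof (rule prop_concl_adjoin)
  show "{f} \<subseteq> gen_alg B {f}" "\<forall>a\<in>{f}. \<forall>x. 0 \<le> a x"
    using gen_alg_generators assms(4) by (auto simp: f_def intro: real_root_ge_zero)
  fix y x assume y: "y \<in> char_space (gen_alg B {f})" and "\<forall>a\<in>Q \<union> {f}. 0 \<le> y a"
    and "\<forall>b\<in>B. y b = b x"
  moreover have "g \<in> gen_alg B {f}"
    using assms(3) gen_alg_superset by blast
  moreover have "\<forall>x. f x ^ s = g x"
    using assms(1,2,4) by (simp add: f_def)
  ultimately have "y f = root s (y g)"
    using char_space_even_root[OF subalgebra_gen_alg y _ _ assms(2)] gen_alg_generators by blast
  then show "y f = f x"
    using assms(3) \<open>\<forall>b\<in>B. y b = b x\<close> by (simp add: f_def)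
qed

lemma adjoin_inverse:
  assumes "g \<in> B" "\<forall>x. g x \<noteq> 0"
  defines "f \<equiv> \<lambda>x. 1 / g x"
  shows "prop_concl B (gen_alg B {f}) (gen_qm (gen_alg B {f}) Q)"
proof -
  have "y f = f x" if y: "y \<in> char_space (gen_alg B {f})" and "\<forall>b\<in>B. y b = b x" for y x
  proof -
    have "g \<in> gen_alg B {f}"
      using assms(1) gen_alg_superset by blast
    moreover have "\<forall>x. f x * g x = 1"
      using assms(2) by (simp add: f_def)
    ultimately have "y f = 1 / y g"
      using char_space_inverse[OF y] gen_alg_generators by blast
    then show ?thesis
      using assms(1) that(2) by (simp add: f_def)
  qed
  then show ?thesis
    using prop_concl_adjoin[of "{}" f] by simp
qed

lemma adjoin_case_split:
  assumes "g \<in> B" "h \<in> B" "q \<in> B" "\<forall>x. q x = 0 \<longrightarrow> g x = h x"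
  defines "f \<equiv> \<lambda>x. if 0 \<le> q x then g x else h x"
  shows "prop_concl B (gen_alg B {f})
           (gen_qm (gen_alg B {f}) (Q \<union> {(\<lambda>x. - q x * (f x - g x)^2), (\<lambda>x. q x * (f x - h x)^2)}))"
proof (rule prop_concl_adjoin)
  let ?A = "gen_alg B {f}"
  have A: "subalgebra ?A"
    by (rule subalgebra_gen_alg)
  have in_A: "f \<in> ?A" "g \<in> ?A" "h \<in> ?A" "q \<in> ?A"
    using assms(1-3) gen_alg_generators gen_alg_superset by blast+
  have "(\<lambda>x. - q x * (f x - g x)^2) \<in> ?A" "(\<lambda>x. q x * (f x - h x)^2) \<in> ?A"
    using subalgebra_mult[OF A subalgebra_uminus[OF A in_A(4)] subalgebra_power[OF A subalgebra_diff[OF A in_A(1,2)]]]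
      subalgebra_mult[OF A in_A(4) subalgebra_power[OF A subalgebra_diff[OF A in_A(1,3)]]]
    by simp_all
  then show "{(\<lambda>x. - q x * (f x - g x)^2), (\<lambda>x. q x * (f x - h x)^2)} \<subseteq> ?A"
    by blast
  show "\<forall>a\<in>{(\<lambda>x. - q x * (f x - g x)^2), (\<lambda>x. q x * (f x - h x)^2)}. \<forall>x. 0 \<le> a x"
    by (auto simp: f_def mult_nonpos_nonneg)
  fix y x assume y: "y \<in> char_space ?A"
    and nonneg: "\<forall>a\<in>Q \<union> {(\<lambda>x. - q x * (f x - g x)^2), (\<lambda>x. q x * (f x - h x)^2)}. 0 \<le> y a"
    and "\<forall>b\<in>B. y b = b x"
  have "\<forall>x. (f x - g x) * (f x - h x) = 0"
    by (simp add: f_def)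
  then have "y f = y g \<or> y f = y h" "0 < y q \<Longrightarrow> y f = y g" "y q < 0 \<Longrightarrow> y f = y h"
    using char_space_case_split[OF A y in_A] nonneg by simp_all
  moreover have "y g = g x" "y h = h x" "y q = q x"
    using assms(1-3) \<open>\<forall>b\<in>B. y b = b x\<close> by auto
  ultimately consider "q x = 0" "y f = g x \<or> y f = h x" | "0 < q x" "y f = g x" | "q x < 0" "y f = h x"
    by (cases "q x" "0 :: real" rule: linorder_cases) auto
  then show "y f = f x"
    by cases (use assms(4) in \<open>auto simp: f_def\<close>)
qed

end

theorem proposition3p1:
  fixes B Q :: "('x \<Rightarrow> real) set"
  assumes "subalgebra B"
    and "quadratic_module B Q"
    and "KX Q = UNIV"
    and "range (evalm B) = KY B Q"
  shows
    "(\<forall>r g. odd r \<and> g \<in> B \<longrightarrow>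
       (let f = (\<lambda>x. root r (g x)); A = gen_alg B {f}
        in prop_concl B A (gen_qm A Q)))
   \<and> (\<forall>s g. even s \<and> 0 < s \<and> g \<in> B \<and> (\<forall>x. 0 \<le> g x) \<longrightarrow>
       (let f = (\<lambda>x. root s (g x)); A = gen_alg B {f}
        in prop_concl B A (gen_qm A (Q \<union> {f}))))
   \<and> (\<forall>g. g \<in> B \<and> (\<forall>x. g x \<noteq> 0) \<longrightarrow>
       (let f = (\<lambda>x. 1 / g x); A = gen_alg B {f}
        in prop_concl B A (gen_qm A Q)))
   \<and> (\<forall>g h q. g \<in> B \<and> h \<in> B \<and> q \<in> B \<and> (\<forall>x. q x = 0 \<longrightarrow> g x = h x) \<longrightarrow>
       (let f = (\<lambda>x. if 0 \<le> q x then g x else h x); A = gen_alg B {f}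
        in prop_concl B A (gen_qm A (Q \<union> {(\<lambda>x. - q x * (f x - g x)^2), (\<lambda>x. q x * (f x - h x)^2)}))))"
  using adjoin_odd_root[OF assms] adjoin_even_root[OF assms]
    adjoin_inverse[OF assms] adjoin_case_split[OF assms]
  by (simp add: Let_def)

end
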